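(* Let $u_1,\dots,u_n$ be words over $[n]$ with $u_j\in[n]^{k_j}$ ($k_j\geq0$). Then \[ \Pi\left(\begin{bmatrix}e_{u_1}\\ \vdots\\ e_{u_n}\end{bmatrix}\right)=\sum_{j=1}^n\left(e_{u_j}\otimes f_j-\frac{\delta^l(l_{ju_j})[1\oplus\cdots\oplus1]}{k_j+1}\right), \] where $ju_j$ denotes the word obtained by prefixing the letter $j$ to $u_j$.
   Context: Let $\{e_1,\dots,e_n\}$ be an orthonormal basis of $\mathbb{C}^n$, $\{f_1,\dots,f_n\}$ the standard basis. The full Fock space is $\mathcal{F}(\mathbb{C}^n)=\mathbb{C}1\oplus\bigoplus_{k\geq1}(\mathbb{C}^n)^{\otimes k}$; for a word $w=i_1\cdots i_k$ over $[n]=\{1,\dots,n\}$, $e_w=e_{i_1}\otimes\cdots\otimes e_{i_k}$, $e_\epsilon=1$; $[n]^k$ is the set of words of length $k$. Let $l_je_w=e_{jw}$, $l_u=l_{u_1}\cdots l_{u_p}$ for $u=u_1\cdots u_p$, $s_j=l_j+l_j^*$. Let $\mathbb{C}^l_{\langle n\rangle}$ (resp. $\mathbb{C}^s_{\langle n\rangle}$) be the unital algebra generated by $l_1,\dots,l_n$ (resp. $s_1,\dots,s_n$), and $\delta^l$ (resp. $\delta^s$) the cyclic gradient: the linear map into $n$-tuples ($\cong$ algebra $\otimes\,\mathbb{C}^n$) with $\delta^l(l_{i_1}\cdots l_{i_p})=\sum_{j=1}^p l_{i_{j+1}}\cdots l_{i_p}l_{i_1}\cdots l_{i_{j-1}}\otimes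 f_{i_j}$ (resp. the same with $s$ in place of $l$). For a tuple $(x_1,\dots,x_n)$ of operators, $(x_1,\dots,x_n)[1\oplus\cdots\oplus1]=(x_11,\dots,x_n1)\in\mathcal{F}(\mathbb{C}^n)^n$. The free Leray projection $\Pi$ (on the Fock space side) is the orthogonal projection of $\mathcal{F}(\mathbb{C}^n)^n$ onto $\mathcal{F}(\mathbb{C}^n)^n\ominus\overline{\delta^s(\mathbb{C}^s_{\langle n\rangle})[1\oplus\cdots\oplus1]}$, the closure of the image on the vacuum of the free divergence-free vector field; here $\delta^s(\mathbb{C}^s_{\langle n\rangle})[1\oplus\cdots\oplus1]=\delta^l(\mathbb{C}^l_{\langle n\rangle})[1\oplus\cdots\oplus1]$. Vectors of $\mathcal{F}(\mathbb{C}^n)^n$ are identified with $\mathcal{F}(\mathbb{C}^n)\otimes\mathbb{C}^n$ via $(\xi_1,\dots,\xi_n)\mapsto\sum_j\xi_j\otimes f_j$. *)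

theory Defs
  imports "HOL-Analysis.Analysis"
begin

text \<open>A vector of F(C^n)^n = F(C^n) (x) C^n is a function on
  index pairs (w, j) (coefficient of e_w (x) f_j), supported on valid pairs and square summable.\<close>

definition is_word :: "nat \<Rightarrow> nat list \<Rightarrow> bool" where
  "is_word n w \<longleftrightarrow> set w \<subseteq> {1..n}"

definition valid_idx :: "nat \<Rightarrow> nat list \<times> nat \<Rightarrow> bool" where
  "valid_idx n k \<longleftrightarrow> is_word n (fst k) \<and> snd k \<in> {1..n}"

definition fockn :: "nat \<Rightarrow> (nat list \<times> nat \<Rightarrow> complex) set" where
  "fockn n = {x. (\<forall>k. x k \<noteq> 0 \<longrightarrow> valid_idx n k) \<and> (\<lambda>k. (cmod (x k))\<^sup>2) summable_on UNIV}"

definition finner :: "(nat list \<times> nat \<Rightarrow> complex) \<Rightarrow> (nat list \<times> nat \<Rightarrow> complex) \<Rightarrow> complex" where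
  "finner x y = infsum (\<lambda>k. x k * cnj (y k)) UNIV"

definition fnorm :: "(nat list \<times> nat \<Rightarrow> complex) \<Rightarrow> real" where
  "fnorm x = sqrt (infsum (\<lambda>k. (cmod (x k))\<^sup>2) UNIV)"

definition bvec :: "nat list \<Rightarrow> nat \<Rightarrow> nat list \<times> nat \<Rightarrow> complex" where
  "bvec w j = (\<lambda>k. if k = (w, j) then 1 else 0)"

text \<open>delta^l(l_v)[1 (+) ... (+) 1] for a word v = i_1 ... i_p:
  sum over positions j of e_{i_{j+1} ... i_p i_1 ... i_{j-1}} (x) f_{i_j}
  (0-based position j below).\<close>
definition delta_vac :: "nat list \<Rightarrow> nat list \<times> nat \<Rightarrow> complex" where
  "delta_vac v = (\<lambda>k. \<Sum>j<length v. bvec (drop (Suc j) v @ take j v) (v ! j) k)"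

definition delta_span :: "nat \<Rightarrow> (nat list \<times> nat \<Rightarrow> complex) set" where
  "delta_span n = {x. \<exists>U c. finite U \<and> (\<forall>u\<in>U. is_word n u) \<and>
                       x = (\<lambda>k. \<Sum>u\<in>U. c u * delta_vac u k)}"

definition fclosure :: "nat \<Rightarrow> (nat list \<times> nat \<Rightarrow> complex) set \<Rightarrow> (nat list \<times> nat \<Rightarrow> complex) set" where
  "fclosure n S = {x \<in> fockn n. \<forall>\<epsilon>>0. \<exists>z\<in>S. fnorm (\<lambda>k. x k - z k) < \<epsilon>}"

definition orth_compl :: "nat \<Rightarrow> (nat list \<times> nat \<Rightarrow> complex) set \<Rightarrow> (nat list \<times> nat \<Rightarrow> complex) set" where
  "orth_compl n S = {y \<in> fockn n. \<forall>z\<in>S. finner y z = 0}"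

definition orth_proj :: "(nat list \<times> nat \<Rightarrow> complex) set \<Rightarrow> (nat list \<times> nat \<Rightarrow> complex) \<Rightarrow> (nat list \<times> nat \<Rightarrow> complex)" where
  "orth_proj V x = (THE y. y \<in> V \<and> (\<forall>v\<in>V. finner (\<lambda>k. x k - y k) v = 0))"

definition leray :: "nat \<Rightarrow> (nat list \<times> nat \<Rightarrow> complex) \<Rightarrow> (nat list \<times> nat \<Rightarrow> complex)" where
  "leray n = orth_proj (orth_compl n (fclosure n (delta_span n)))"

end

theory Submission
  imports Defs
begin

text \<open>
  Write \<delta>(v) for the vector delta^l(l_v)[1 + ... + 1]. Let x be the given vector, d the sum of
  the terms \<delta>(j u_j) / (k_j + 1), and y = x - d. As d lies in the span of the \<delta>(v), y is the
  projection of x once y is orthogonal to every \<delta>(v); orthogonality then passes to the closure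
  because y is finitely supported. The coefficient of e_w (x) f_j in \<delta>(v) is the number of cyclic
  rotations of v equal to the word j w. That number does not change when j w is itself rotated, so
  the inner product of \<delta>(a) with \<delta>(v) is |a| times the number of rotations of v equal to a.
  For a = j u_j the factor |a| = k_j + 1 cancels the denominator, and the two contributions of
  each j to the inner product of y with \<delta>(v) cancel.
\<close>

abbreviation square_summable :: "('a \<Rightarrow> complex) \<Rightarrow> bool" where
  "square_summable x \<equiv> (\<lambda>k. (cmod (x k))\<^sup>2) summable_on UNIV"

lemma square_summable_diff:
  assumes "square_summable x" "square_summable y"
  shows "square_summable (\<lambda>k. x k - y k)"
proof -
  have bound: "(cmod (x k - y k))\<^sup>2 \<le> 2 * (cmod (x k))\<^sup>2 + 2 * (cmod (y k))\<^sup>2" for k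
  proof -
    have "(cmod (x k - y k))\<^sup>2 \<le> (cmod (x k) + cmod (y k))\<^sup>2"
      using norm_triangle_ineq4 by (simp add: power_mono)
    also have "\<dots> \<le> 2 * (cmod (x k))\<^sup>2 + 2 * (cmod (y k))\<^sup>2"
      using sum_squares_bound[of "cmod (x k)" "cmod (y k)"] by (simp add: power2_sum)
    finally show ?thesis .
  qed
  have "(\<lambda>k. 2 * (cmod (x k))\<^sup>2 + 2 * (cmod (y k))\<^sup>2) summable_on UNIV"
    using assms by (intro summable_on_add summable_on_cmult_right)
  then show ?thesis
    by (rule summable_on_comparison_test) (use bound in auto)
qed

lemma summable_on_mult_cnj:
  assumes "square_summable x" "square_summable y"
  shows "(\<lambda>k. x k * cnj (y k)) summable_on UNIV"
proof (rule abs_summable_summable)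
  have bound: "norm (x k * cnj (y k)) \<le> (cmod (x k))\<^sup>2 + (cmod (y k))\<^sup>2" for k
    unfolding norm_mult complex_mod_cnj
    using sum_squares_bound[of "cmod (x k)" "cmod (y k)"]
      mult_nonneg_nonneg[OF norm_ge_zero norm_ge_zero, of "x k" "y k"]
    by linarith
  have "(\<lambda>k. (cmod (x k))\<^sup>2 + (cmod (y k))\<^sup>2) summable_on UNIV"
    using assms by (rule summable_on_add)
  then show "(\<lambda>k. norm (x k * cnj (y k))) summable_on UNIV"
    by (rule summable_on_comparison_test) (use bound in auto)
qed

lemma square_summable_finite_support:
  "finite {k. x k \<noteq> 0} \<Longrightarrow> square_summable x"
  by (rule finite_nonzero_values_imp_summable_on) (auto elim: finite_subset[rotated])

lemma norm_le_fnorm: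
  assumes "square_summable w"
  shows "cmod (w k) \<le> fnorm w"
proof -
  have "(cmod (w k))\<^sup>2 \<le> infsum (\<lambda>k. (cmod (w k))\<^sup>2) UNIV"
    using finite_sum_le_infsum[OF assms, of "{k}"] by simp
  then show ?thesis
    unfolding fnorm_def using real_le_rsqrt by blast
qed

lemma finner_finite_support:
  assumes "finite S" "{k. x k \<noteq> 0} \<subseteq> S"
  shows "finner x z = (\<Sum>k\<in>S. x k * cnj (z k))"
proof -
  have "finner x z = infsum (\<lambda>k. x k * cnj (z k)) S"
    unfolding finner_def by (rule infsum_cong_neutral) (use assms in auto)
  then show ?thesis
    using assms(1) by simp
qed

lemma finner_commute: "finner x y = cnj (finner y x)"
  unfolding finner_def by (subst infsum_cnj[symmetric]) (simp add: mult.commute)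

lemma finner_diff_left:
  assumes "square_summable x" "square_summable y" "square_summable z"
  shows "finner (\<lambda>k. x k - y k) z = finner x z - finner y z"
proof -
  have "finner (\<lambda>k. x k - y k) z = infsum (\<lambda>k. x k * cnj (z k) + - (y k * cnj (z k))) UNIV"
    unfolding finner_def by (simp add: algebra_simps)
  also have "\<dots> = finner x z + - finner y z"
    unfolding finner_def
    using infsum_add[OF summable_on_mult_cnj[OF assms(1,3)]
        summable_on_uminus[THEN iffD2, OF summable_on_mult_cnj[OF assms(2,3)]]]
    by (simp only: infsum_uminus)
  finally show ?thesis by simp
qed

lemma finner_diff_right:
  assumes "square_summable x" "square_summable y" "square_summable z"
  shows "finner x (\<lambda>k. y k - z k) = finner x y - finner x z"
  using finner_diff_left[OF assms(2,3,1)]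
  by (simp add: finner_commute[of x y] finner_commute[of x z] finner_commute[of x "\<lambda>k. y k - z k"])

lemma finner_divide_left: "finner (\<lambda>k. x k / c) z = finner x z / c"
  unfolding finner_def using infsum_cmult_left'[of "\<lambda>k. x k * cnj (z k)" "inverse c" UNIV]
  by (simp add: divide_inverse mult_ac)

lemma support_sum_subset:
  "{k. (\<Sum>i\<in>I. f i k) \<noteq> (0::'b::comm_monoid_add)} \<subseteq> (\<Union>i\<in>I. {k. f i k \<noteq> 0})"
  by (auto intro: ccontr)

lemma finner_sum_left:
  assumes "finite I" "\<And>i. i \<in> I \<Longrightarrow> finite {k. f i k \<noteq> 0}"
  shows "finner (\<lambda>k. \<Sum>i\<in>I. f i k) z = (\<Sum>i\<in>I. finner (f i) z)"
proof -
  define S where "S = (\<Union>i\<in>I. {k. f i k \<noteq> 0})"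
  have S: "finite S" "\<And>i. i \<in> I \<Longrightarrow> {k. f i k \<noteq> 0} \<subseteq> S"
    using assms by (auto simp: S_def)
  have "{k. (\<Sum>i\<in>I. f i k) \<noteq> 0} \<subseteq> S"
    unfolding S_def by (rule support_sum_subset)
  then have "finner (\<lambda>k. \<Sum>i\<in>I. f i k) z = (\<Sum>k\<in>S. \<Sum>i\<in>I. f i k * cnj (z k))"
    by (simp add: finner_finite_support[OF S(1)] sum_distrib_right)
  also have "\<dots> = (\<Sum>i\<in>I. finner (f i) z)"
    by (subst sum.swap) (simp add: finner_finite_support[OF S])
  finally show ?thesis .
qed

lemma finner_sum_right:
  assumes "finite {k. y k \<noteq> 0}"
  shows "finner y (\<lambda>k. \<Sum>i\<in>I. c i * z i k) = (\<Sum>i\<in>I. cnj (c i) * finner y (z i))"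
proof -
  have "finner y (\<lambda>k. \<Sum>i\<in>I. c i * z i k) = (\<Sum>k\<in>{k. y k \<noteq> 0}. \<Sum>i\<in>I. cnj (c i) * (y k * cnj (z i k)))"
    by (simp add: finner_finite_support[OF assms order_refl] cnj_sum sum_distrib_left mult_ac)
  also have "\<dots> = (\<Sum>i\<in>I. cnj (c i) * finner y (z i))"
    by (subst sum.swap) (simp add: finner_finite_support[OF assms order_refl] sum_distrib_left)
  finally show ?thesis .
qed

lemma finner_self_eq_0D:
  assumes "square_summable d" "finner d d = 0"
  shows "d k = 0"
proof -
  have "Re (finner d d) = infsum (\<lambda>k. Re (d k * cnj (d k))) UNIV"
    unfolding finner_def
    by (rule infsum_Re[symmetric, OF summable_on_mult_cnj[OF assms(1) assms(1)]])
  also have "\<dots> = infsum (\<lambda>k. (cmod (d k))\<^sup>2) UNIV"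
    by (simp only: complex_norm_square[symmetric] Re_complex_of_real)
  finally have "infsum (\<lambda>k. (cmod (d k))\<^sup>2) UNIV \<le> 0"
    using assms(2) by simp
  then have "(cmod (d k))\<^sup>2 = 0"
    by (rule nonneg_infsum_le_0D) (use assms(1) in auto)
  then show ?thesis by simp
qed

lemma norm_finner_le:
  assumes "finite {k. y k \<noteq> 0}" "square_summable w"
  shows "cmod (finner y w) \<le> (\<Sum>k\<in>{k. y k \<noteq> 0}. cmod (y k)) * fnorm w"
proof -
  have "cmod (finner y w) \<le> (\<Sum>k\<in>{k. y k \<noteq> 0}. cmod (y k) * cmod (w k))"
    unfolding finner_finite_support[OF assms(1) order_refl]
    by (rule sum_norm_le) (simp add: norm_mult)
  also have "\<dots> \<le> (\<Sum>k\<in>{k. y k \<noteq> 0}. cmod (y k) * fnorm w)"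
    by (intro sum_mono mult_left_mono norm_le_fnorm assms(2)) simp
  finally show ?thesis
    by (simp add: sum_distrib_right)
qed

lemma finner_fclosure_eq_0:
  assumes y: "finite {k. y k \<noteq> 0}" and S: "S \<subseteq> fockn n" "\<And>z. z \<in> S \<Longrightarrow> finner y z = 0"
    and z: "z \<in> fclosure n S"
  shows "finner y z = 0"
proof -
  define C where "C = (\<Sum>k\<in>{k. y k \<noteq> 0}. cmod (y k))"
  have "C \<ge> 0"
    unfolding C_def by (simp add: sum_nonneg)
  have "cmod (finner y z) \<le> e" if "e > 0" for e
  proof -
    have "e / (C + 1) > 0"
      using \<open>e > 0\<close> \<open>C \<ge> 0\<close> by simp
    then obtain z' where z': "z' \<in> S" "fnorm (\<lambda>k. z k - z' k) < e / (C + 1)"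
      using z unfolding fclosure_def by blast
    have l2: "square_summable y" "square_summable z" "square_summable z'"
      using square_summable_finite_support[OF y] z z'(1) S(1) by (auto simp: fclosure_def fockn_def)
    have "finner y z = finner y (\<lambda>k. z k - z' k)"
      using finner_diff_right[OF l2] S(2)[OF z'(1)] by simp
    then have "cmod (finner y z) \<le> C * fnorm (\<lambda>k. z k - z' k)"
      unfolding C_def using norm_finner_le[OF y square_summable_diff[OF l2(2,3)]] by simp
    also have "\<dots> \<le> C * (e / (C + 1))"
      using mult_left_mono[OF less_imp_le[OF z'(2)] \<open>C \<ge> 0\<close>] .
    also have "\<dots> \<le> e"
      using \<open>C \<ge> 0\<close> \<open>e > 0\<close> by (simp add: field_simps)
    finally show ?thesis .
  qed
  then have "cmod (finner y z) \<le> 0"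
    using field_le_epsilon[of "cmod (finner y z)" 0] by simp
  then show ?thesis
    by simp
qed

lemma fclosure_superset: "S \<inter> fockn n \<subseteq> fclosure n S"
  unfolding fclosure_def by (force simp: fnorm_def)

lemma orth_compl_diff:
  assumes "T \<subseteq> fockn n" "y \<in> orth_compl n T" "y' \<in> orth_compl n T"
  shows "(\<lambda>k. y k - y' k) \<in> orth_compl n T"
proof -
  have l2: "square_summable y" "square_summable y'"
    using assms(2,3) by (auto simp: orth_compl_def fockn_def)
  have "valid_idx n k" if "y k - y' k \<noteq> 0" for k
  proof -
    have "y k \<noteq> 0 \<or> y' k \<noteq> 0"
      using that by auto
    then show ?thesis
      using assms(2,3) unfolding orth_compl_def fockn_def by blast
  qed
  then have "(\<lambda>k. y k - y' k) \<in> fockn n"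
    using square_summable_diff[OF l2] by (simp add: fockn_def)
  moreover have "finner (\<lambda>k. y k - y' k) z = 0" if "z \<in> T" for z
    using finner_diff_left[OF l2, of z] that assms by (auto simp: orth_compl_def fockn_def)
  ultimately show ?thesis
    by (simp add: orth_compl_def)
qed

lemma orth_proj_orth_compl_eqI:
  assumes T: "T \<subseteq> fockn n" and x: "square_summable x"
    and y: "y \<in> orth_compl n T" and xy: "(\<lambda>k. x k - y k) \<in> T"
  shows "orth_proj (orth_compl n T) x = y"
  unfolding orth_proj_def
proof (rule the_equality)
  have residual_orth: "finner (\<lambda>k. x k - y k) v = 0" if "v \<in> orth_compl n T" for v
    using that xy finner_commute[of "\<lambda>k. x k - y k" v] by (simp add: orth_compl_def)
  then show "y \<in> orth_compl n T \<and> (\<forall>v\<in>orth_compl n T. finner (\<lambda>k. x k - y k) v = 0)"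
    using y by blast
  fix y' assume y': "y' \<in> orth_compl n T \<and> (\<forall>v\<in>orth_compl n T. finner (\<lambda>k. x k - y' k) v = 0)"
  define d where "d = (\<lambda>k. y k - y' k)"
  have d: "d \<in> orth_compl n T"
    unfolding d_def using orth_compl_diff[OF T y] y' by blast
  have l2: "square_summable y" "square_summable y'" "square_summable d"
    using y y' d by (auto simp: orth_compl_def fockn_def)
  have "finner d d = finner (\<lambda>k. x k - y' k) d - finner (\<lambda>k. x k - y k) d"
    using finner_diff_left[OF square_summable_diff[OF x l2(2)] square_summable_diff[OF x l2(1)]
        l2(3)]
    by (simp add: d_def)
  also have "\<dots> = 0"
    using y' residual_orth[OF d] d by simp
  finally show "y' = y"
    using finner_self_eq_0D[OF l2(3)] by (auto simp: d_def)
qed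

definition fin_fockn :: "nat \<Rightarrow> (nat list \<times> nat \<Rightarrow> complex) set" where
  "fin_fockn n = {x. finite {k. x k \<noteq> 0} \<and> (\<forall>k. x k \<noteq> 0 \<longrightarrow> valid_idx n k)}"

lemma fin_fockn_subset_fockn: "fin_fockn n \<subseteq> fockn n"
  by (auto simp: fin_fockn_def fockn_def square_summable_finite_support)

lemma fin_fockn_sum:
  assumes "finite I" "\<And>i. i \<in> I \<Longrightarrow> f i \<in> fin_fockn n"
  shows "(\<lambda>k. \<Sum>i\<in>I. f i k) \<in> fin_fockn n"
  using support_sum_subset[of f I] assms
  unfolding fin_fockn_def by (auto intro: finite_subset)

lemma fin_fockn_diff:
  "x \<in> fin_fockn n \<Longrightarrow> y \<in> fin_fockn n \<Longrightarrow> (\<lambda>k. x k - y k) \<in> fin_fockn n"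
  unfolding fin_fockn_def
  by (auto intro: finite_subset[of _ "{k. x k \<noteq> 0} \<union> {k. y k \<noteq> 0}"]) metis

lemma fin_fockn_mult: "x \<in> fin_fockn n \<Longrightarrow> (\<lambda>k. c * x k) \<in> fin_fockn n"
  unfolding fin_fockn_def by (auto intro: finite_subset[of _ "{k. x k \<noteq> 0}"])

lemma fin_fockn_divide: "x \<in> fin_fockn n \<Longrightarrow> (\<lambda>k. x k / c) \<in> fin_fockn n"
  using fin_fockn_mult[of x n "inverse c"] by (simp add: divide_inverse mult.commute)

lemma bvec_in_fin_fockn: "is_word n w \<Longrightarrow> j \<in> {1..n} \<Longrightarrow> bvec w j \<in> fin_fockn n"
  unfolding fin_fockn_def bvec_def valid_idx_def
  by (auto intro: finite_subset[of _ "{(w, j)}"])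

lemma delta_vac_in_fin_fockn:
  assumes "is_word n v"
  shows "delta_vac v \<in> fin_fockn n"
proof -
  have "is_word n (drop (Suc p) v @ take p v)" "v ! p \<in> {1..n}" if "p < length v" for p
    using assms that set_drop_subset set_take_subset nth_mem by (fastforce simp: is_word_def)+
  then show ?thesis
    unfolding delta_vac_def by (intro fin_fockn_sum bvec_in_fin_fockn) auto
qed

lemma delta_span_subset_fin_fockn: "delta_span n \<subseteq> fin_fockn n"
  unfolding delta_span_def
  by (auto intro!: fin_fockn_sum fin_fockn_mult delta_vac_in_fin_fockn)

definition rotations :: "'a list \<Rightarrow> 'a list list" where
  "rotations v = map (\<lambda>p. rotate p v) [0..<length v]"

lemma rotate_conv_nth_Cons: "p < length v \<Longrightarrow> rotate p v = v ! p # drop (Suc p) v @ take p v"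
  by (simp add: rotate_drop_take Cons_nth_drop_Suc)

lemma count_list_map_upt:
  "of_nat (count_list (map f [0..<m]) y) = (\<Sum>p<m. if f p = y then 1 else (0::'b::semiring_1))"
  by (induction m) auto

lemma count_list_rotate: "count_list (rotate r xs) x = count_list xs x"
  by (metis rotate_drop_take append_take_drop_id count_list_append add.commute)

lemma inj_rotate: "inj (rotate r)"
  by (simp add: rotate_def inj_rotate1)

lemma rotate_rotations: "rotate r (rotations v) = map (rotate r) (rotations v)"
proof (rule nth_equalityI)
  fix p assume "p < length (rotate r (rotations v))"
  then have p: "p < length v"
    by (simp add: rotations_def)
  moreover have "(r + p) mod length v < length v"
    using p by (intro mod_less_divisor) linarith
  ultimately have "rotate r (rotations v) ! p = rotate ((r + p) mod length v) v"
    by (simp add: rotations_def nth_rotate del: upt_Suc)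
  also have "\<dots> = rotate r (rotate p v)"
    by (simp add: rotate_rotate flip: rotate_conv_mod)
  finally show "rotate r (rotations v) ! p = map (rotate r) (rotations v) ! p"
    using p by (simp add: rotations_def)
qed simp

lemma count_rotations_rotate:
  "count_list (rotations v) (rotate r a) = count_list (rotations v) a"
  by (metis count_list_rotate rotate_rotations count_list_map_conv inj_rotate)

lemma delta_vac_apply: "delta_vac v (w, j) = of_nat (count_list (rotations v) (j # w))"
  unfolding delta_vac_def bvec_def rotations_def count_list_map_upt
  by (rule sum.cong) (auto simp: rotate_conv_nth_Cons)

lemma finner_bvec_left: "finner (bvec w j) z = cnj (z (w, j))"
  by (subst finner_finite_support[of "{(w, j)}"]) (auto simp: bvec_def)

lemma finite_support_bvec: "finite {k. bvec w j k \<noteq> 0}"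
  by (rule finite_subset[of _ "{(w, j)}"]) (auto simp: bvec_def)

lemma finite_support_delta_vac: "finite {k. delta_vac v k \<noteq> 0}"
  unfolding delta_vac_def
  by (rule finite_subset[OF support_sum_subset]) (simp add: finite_support_bvec)

lemma finner_delta_vac_delta_vac:
  "finner (delta_vac a) (delta_vac v) = of_nat (length a * count_list (rotations v) a)"
proof -
  have "finner (delta_vac a) (delta_vac v)
      = (\<Sum>q<length a. of_nat (count_list (rotations v) (rotate q a)))"
    unfolding delta_vac_def[of a]
    by (simp add: finner_sum_left finite_support_bvec finner_bvec_left delta_vac_apply
        rotate_conv_nth_Cons)
  then show ?thesis
    by (simp add: count_rotations_rotate)
qed

lemma finner_bvec_minus_delta_vac:
  "finner (\<lambda>k. bvec w j k - delta_vac (j # w) k / of_nat (length w + 1)) (delta_vac v) = 0"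
proof -
  have fs: "finite {k. delta_vac (j # w) k / of_nat (length w + 1) \<noteq> 0}"
    by (rule finite_subset[OF _ finite_support_delta_vac]) auto
  have "finner (\<lambda>k. bvec w j k - delta_vac (j # w) k / of_nat (length w + 1)) (delta_vac v)
      = finner (bvec w j) (delta_vac v)
        - finner (delta_vac (j # w)) (delta_vac v) / of_nat (length w + 1)"
    by (simp add: finner_diff_left square_summable_finite_support fs finite_support_bvec
        finite_support_delta_vac finner_divide_left)
  also have "\<dots> = of_nat (count_list (rotations v) (j # w))
      - of_nat (Suc (length w) * count_list (rotations v) (j # w)) / of_nat (Suc (length w))"
    by (simp add: finner_bvec_left delta_vac_apply finner_delta_vac_delta_vac)
  also have "\<dots> = 0"
    by (simp only: of_nat_mult nonzero_mult_div_cancel_left[OF of_nat_neq_0] diff_self)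
  finally show ?thesis .
qed

lemma finner_delta_span_eq_0:
  assumes "finite {k. y k \<noteq> 0}" "\<And>v. finner y (delta_vac v) = 0" "z \<in> delta_span n"
  shows "finner y z = 0"
proof -
  obtain U c where "z = (\<lambda>k. \<Sum>u\<in>U. c u * delta_vac u k)"
    using assms(3) unfolding delta_span_def by blast
  then show ?thesis
    by (simp add: finner_sum_right[OF assms(1)] assms(2))
qed

lemma orth_compl_fclosure_delta_spanI:
  assumes y: "y \<in> fin_fockn n" and orth: "\<And>v. finner y (delta_vac v) = 0"
  shows "y \<in> orth_compl n (fclosure n (delta_span n))"
proof -
  have fin: "finite {k. y k \<noteq> 0}"
    using y by (simp add: fin_fockn_def)
  have span: "delta_span n \<subseteq> fockn n"
    using delta_span_subset_fin_fockn fin_fockn_subset_fockn by blast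
  have "finner y z = 0" if "z \<in> fclosure n (delta_span n)" for z
    by (rule finner_fclosure_eq_0[OF fin span finner_delta_span_eq_0[OF fin orth] that])
  then show ?thesis
    using y fin_fockn_subset_fockn by (auto simp: orth_compl_def)
qed

lemma sum_delta_vac_in_delta_span:
  assumes "finite J" "\<And>j. j \<in> J \<Longrightarrow> is_word n (w j)"
  shows "(\<lambda>k. \<Sum>j\<in>J. c j * delta_vac (w j) k) \<in> delta_span n"
proof -
  define c' where "c' u = (\<Sum>j\<in>{j\<in>J. w j = u}. c j)" for u
  have "(\<Sum>j\<in>J. c j * delta_vac (w j) k)
      = (\<Sum>u\<in>w ` J. \<Sum>j\<in>{j\<in>J. w j = u}. c j * delta_vac (w j) k)" for k
    by (rule sum.image_gen[OF assms(1)])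
  also have "\<dots> k = (\<Sum>u\<in>w ` J. c' u * delta_vac u k)" for k
    unfolding c'_def by (intro sum.cong) (auto simp: sum_distrib_right)
  finally have "(\<lambda>k. \<Sum>j\<in>J. c j * delta_vac (w j) k) = (\<lambda>k. \<Sum>u\<in>w ` J. c' u * delta_vac u k)"
    by (rule ext)
  then show ?thesis
    unfolding delta_span_def using assms by (intro CollectI exI[of _ "w ` J"] exI[of _ c']) auto
qed

lemma sum_bvec_minus_delta_vac_in_orth_compl:
  assumes "finite J" "J \<subseteq> {1..n}" "\<And>j. j \<in> J \<Longrightarrow> is_word n (w j)"
  shows "(\<lambda>k. \<Sum>j\<in>J. bvec (w j) j k - delta_vac (j # w j) k / of_nat (length (w j) + 1))
    \<in> orth_compl n (fclosure n (delta_span n))"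
    (is "(\<lambda>k. \<Sum>j\<in>J. ?t j k) \<in> _")
proof (rule orth_compl_fclosure_delta_spanI)
  have terms: "?t j \<in> fin_fockn n" if "j \<in> J" for j
  proof -
    have "j \<in> {1..n}" "is_word n (w j)" "is_word n (j # w j)"
      using assms that by (auto simp: is_word_def)
    then show ?thesis
      by (intro fin_fockn_diff bvec_in_fin_fockn fin_fockn_divide delta_vac_in_fin_fockn)
  qed
  then show "(\<lambda>k. \<Sum>j\<in>J. ?t j k) \<in> fin_fockn n"
    using assms(1) by (rule fin_fockn_sum[rotated])
  show "finner (\<lambda>k. \<Sum>j\<in>J. ?t j k) (delta_vac v) = 0" for v
  proof -
    have "finner (\<lambda>k. \<Sum>j\<in>J. ?t j k) (delta_vac v) = (\<Sum>j\<in>J. finner (?t j) (delta_vac v))"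
      by (rule finner_sum_left[OF assms(1)]) (use terms in \<open>simp add: fin_fockn_def\<close>)
    then show ?thesis
      by (simp only: finner_bvec_minus_delta_vac sum.neutral_const)
  qed
qed

theorem corollary3p5:
  fixes n :: nat and u :: "nat \<Rightarrow> nat list"
  assumes "\<forall>j\<in>{1..n}. is_word n (u j)"
  shows "leray n (\<lambda>k. \<Sum>j=1..n. bvec (u j) j k) =
         (\<lambda>k. \<Sum>j=1..n. bvec (u j) j k
                 - delta_vac (j # u j) k / of_nat (length (u j) + 1))"
    (is "leray n ?x = ?y")
proof -
  define d where "d = (\<lambda>k. \<Sum>j=1..n. inverse (of_nat (length (u j) + 1)) * delta_vac (j # u j) k)"
  have "d \<in> delta_span n"
    unfolding d_def using assms by (intro sum_delta_vac_in_delta_span) (auto simp: is_word_def)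
  then have d: "d \<in> fclosure n (delta_span n)"
    using delta_span_subset_fin_fockn fin_fockn_subset_fockn fclosure_superset by blast
  have "?x \<in> fin_fockn n"
    using assms by (intro fin_fockn_sum bvec_in_fin_fockn) auto
  then have x: "square_summable ?x"
    using fin_fockn_subset_fockn by (auto simp: fockn_def)
  have y: "?y \<in> orth_compl n (fclosure n (delta_span n))"
    using assms by (intro sum_bvec_minus_delta_vac_in_orth_compl) auto
  have "(\<lambda>k. ?x k - ?y k) = d"
    by (simp add: d_def sum_subtractf divide_inverse mult.commute)
  moreover have "fclosure n (delta_span n) \<subseteq> fockn n"
    by (auto simp: fclosure_def)
  ultimately show ?thesis
    unfolding leray_def using orth_proj_orth_compl_eqI[OF _ x y] d by simp
qed

end
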